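(* Let $\mathcal P$ be a random collection of pairwise disjoint finite subsets of $\mathbb Z$. Let $k\ge2$, $\gamma\in\mathbb R$ and $p_0>0$ be such that for all integers $i_1<i_2<\dots<i_k$, $$\Pr\big(\{i_1,\dots,i_k\}\in\mathcal P\big)\ \ge\ p_0\prod_{j=1}^{k-1}(i_{j+1}-i_j)^{-\gamma}.$$ Then $\gamma>1$ and $p_0\le\dfrac{1}{k\,\zeta(\gamma)^{k-1}}$, where $\zeta$ is the Riemann zeta function. *)

theory Defs
  imports "HOL-Probability.Probability"
begin

text \<open>Riemann zeta function on real arguments: the Dirichlet series
  sum over n >= 1 of n to the power (-s). It is only meaningful (convergent) for s > 1,
  which is the range in which it is used.\<close>
definition zeta_real :: "real \<Rightarrow> real" where
  "zeta_real s = (\<Sum>n. 1 / (real (Suc n)) powr s)"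

end

theory Submission
  imports Defs
begin

(* For K = k - 1 gaps g_1, ..., g_K in {1..N} and a position m < k, consider the k-point set
   with consecutive gaps g whose m-th point is 0. These k N^K sets are pairwise distinct and
   all contain 0, so at most one of them belongs to the disjoint family P; hence their
   probabilities sum to at most 1, while by hypothesis the sum is at least
   k p0 (sum_{n=1..N} n^-gamma)^K. Bounded partial sums force gamma > 1, and N -> infinity
   gives k p0 zeta(gamma)^K <= 1. *)

lemma sorted_map_upt_if_increasing:
  fixes i :: "nat \<Rightarrow> 'a::linorder"
  assumes "\<forall>j. Suc j < k \<longrightarrow> i j < i (Suc j)"
  shows "sorted_wrt (<) (map i [0..<k])"
  using assms by (simp add: sorted_wrt_iff_nth_Suc_transp)

lemma increasing_eq_if_image_eq:
  fixes i i' :: "nat \<Rightarrow> 'a::linorder"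
  assumes "\<forall>j. Suc j < k \<longrightarrow> i j < i (Suc j)" "\<forall>j. Suc j < k \<longrightarrow> i' j < i' (Suc j)"
    and "i ` {..<k} = i' ` {..<k}" "j < k"
  shows "i j = i' j"
proof -
  have "map i [0..<k] = map i' [0..<k]"
    using assms(3) by (intro strict_sorted_equal sorted_map_upt_if_increasing assms(1,2))
      (simp add: atLeast0LessThan)
  then show ?thesis
    using assms(4) by (metis length_map length_upt nth_map_upt add_0 minus_nat.diff_0)
qed

lemma inj_on_if_increasing:
  fixes i :: "nat \<Rightarrow> 'a::linorder"
  assumes "\<forall>j. Suc j < k \<longrightarrow> i j < i (Suc j)"
  shows "inj_on i {..<k}"
  using strict_sorted_iff[THEN iffD1, OF sorted_map_upt_if_increasing[OF assms]]
  by (simp add: distinct_map atLeast0LessThan)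

lemma (in prob_space) sum_prob_disjoint_le_1:
  assumes "finite T" "E ` T \<subseteq> events" "disjoint_family_on E T"
  shows "(\<Sum>t\<in>T. prob (E t)) \<le> 1"
  using finite_measure_finite_Union[OF assms] prob_le_1 by metis

lemma disjoint_family_on_membership_events:
  assumes "\<And>\<omega>. \<omega> \<in> \<Omega> \<Longrightarrow> disjoint (P \<omega>)" "inj_on S T" "\<And>t. t \<in> T \<Longrightarrow> x \<in> S t"
  shows "disjoint_family_on (\<lambda>t. {\<omega> \<in> \<Omega>. S t \<in> P \<omega>}) T"
  unfolding disjoint_family_on_def
proof (intro ballI impI)
  fix t t' assume "t \<in> T" "t' \<in> T" "t \<noteq> t'"
  then have "S t \<noteq> S t'" "x \<in> S t \<inter> S t'"
    using assms(2,3) by (auto dest: inj_onD)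
  then show "{\<omega> \<in> \<Omega>. S t \<in> P \<omega>} \<inter> {\<omega> \<in> \<Omega>. S t' \<in> P \<omega>} = {}"
    using assms(1) by (auto simp: disjoint_def)
qed

definition gap_points :: "(nat \<Rightarrow> nat) \<Rightarrow> nat \<Rightarrow> nat \<Rightarrow> int" where
  "gap_points g m j = (\<Sum>l<j. int (g l)) - (\<Sum>l<m. int (g l))"

lemma gap_points_Suc: "gap_points g m (Suc j) - gap_points g m j = int (g j)"
  by (simp add: gap_points_def)

lemma gap_points_self: "gap_points g m m = 0"
  by (simp add: gap_points_def)

lemma gap_points_increasing:
  assumes "\<And>l. l < K \<Longrightarrow> 0 < g l"
  shows "\<forall>j. Suc j < Suc K \<longrightarrow> gap_points g m j < gap_points g m (Suc j)"
  using assms gap_points_Suc[of g m] by (metis Suc_less_SucD diff_gt_0_iff_gt of_nat_0_less_iff)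

lemma inj_on_gap_points_image:
  "inj_on (\<lambda>(m, g). gap_points g m ` {..<Suc K}) ({..<Suc K} \<times> (\<Pi>\<^sub>E l\<in>{..<K}. {0<..}))"
proof (intro inj_onI, clarsimp)
  fix m m' g g'
  assume m: "m < Suc K" "m' < Suc K"
    and g: "g \<in> (\<Pi>\<^sub>E l\<in>{..<K}. {0<..})" "g' \<in> (\<Pi>\<^sub>E l\<in>{..<K}. {0<..})"
    and image_eq: "gap_points g m ` {..<Suc K} = gap_points g' m' ` {..<Suc K}"
  have increasing: "\<forall>j. Suc j < Suc K \<longrightarrow> gap_points h n j < gap_points h n (Suc j)"
    if "h \<in> (\<Pi>\<^sub>E l\<in>{..<K}. {0<..})" for h n
    using that by (intro gap_points_increasing) auto
  have points_eq: "gap_points g m j = gap_points g' m' j" if "j < Suc K" for j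
    using increasing[OF g(1)] increasing[OF g(2)] image_eq that
    by (rule increasing_eq_if_image_eq)
  have "g l = g' l" if "l < K" for l
    using points_eq[of l] points_eq[of "Suc l"] that gap_points_Suc[of g m l] gap_points_Suc[of g' m' l]
    by simp
  then have "g = g'"
    using g by (intro PiE_ext) auto
  moreover have "m = m'"
  proof -
    have "gap_points g m m' = gap_points g m m"
      using points_eq[OF m(2)] \<open>g = g'\<close> by (simp add: gap_points_self)
    then show ?thesis
      using inj_on_if_increasing[OF increasing[OF g(1)]] m by (auto dest: inj_onD)
  qed
  ultimately show "m = m' \<and> g = g'" by simp
qed

lemma (in prob_space) partial_zeta_power_bound:
  fixes P :: "'a \<Rightarrow> int set set"
  assumes disjoint: "\<And>\<omega>. \<omega> \<in> space M \<Longrightarrow> disjoint (P \<omega>)"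
    and measurable: "\<And>S. finite S \<Longrightarrow> {\<omega> \<in> space M. S \<in> P \<omega>} \<in> events"
    and lower_bound: "\<And>i :: nat \<Rightarrow> int. (\<forall>j. Suc j < Suc K \<longrightarrow> i j < i (Suc j)) \<Longrightarrow>
           p0 * (\<Prod>j<K. real_of_int (i (Suc j) - i j) powr (-\<gamma>))
             \<le> prob {\<omega> \<in> space M. i ` {..<Suc K} \<in> P \<omega>}"
  shows "real (Suc K) * p0 * (\<Sum>n=1..N. real n powr (-\<gamma>)) ^ K \<le> 1"
proof -
  define G where "G = (\<Pi>\<^sub>E l\<in>{..<K}. {1..N})"
  define T where "T = {..<Suc K} \<times> G"
  define S where "S = (\<lambda>(m, g). gap_points g m ` {..<Suc K})"
  define E where "E t = {\<omega> \<in> space M. S t \<in> P \<omega>}" for t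
  have "finite T"
    by (simp add: T_def G_def finite_PiE)
  have injective: "inj_on S T"
  proof -
    have "T \<subseteq> {..<Suc K} \<times> (\<Pi>\<^sub>E l\<in>{..<K}. {0<..})"
      unfolding T_def G_def by (intro Sigma_mono PiE_mono) auto
    then show ?thesis
      unfolding S_def by (rule inj_on_subset[OF inj_on_gap_points_image])
  qed
  have contains_0: "0 \<in> S t" if "t \<in> T" for t
    using that unfolding S_def T_def by (force simp: gap_points_self)
  have "disjoint_family_on E T"
    unfolding E_def using disjoint injective contains_0 by (rule disjoint_family_on_membership_events)
  moreover have "E ` T \<subseteq> events"
    using measurable by (auto simp: E_def S_def)
  ultimately have total: "(\<Sum>t\<in>T. prob (E t)) \<le> 1"
    using \<open>finite T\<close> by (intro sum_prob_disjoint_le_1)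
  have "p0 * (\<Prod>j<K. real (g j) powr (-\<gamma>)) \<le> prob (E (m, g))" if "g \<in> G" for m g
  proof -
    have "\<And>l. l < K \<Longrightarrow> 0 < g l"
      using that by (auto simp: G_def PiE_iff Suc_le_eq)
    from lower_bound[OF gap_points_increasing[OF this]] show ?thesis
      by (simp add: E_def S_def gap_points_Suc)
  qed
  then have "(\<Sum>(m, g)\<in>T. p0 * (\<Prod>j<K. real (g j) powr (-\<gamma>))) \<le> (\<Sum>t\<in>T. prob (E t))"
    by (intro sum_mono) (auto simp: T_def)
  also have "(\<Sum>(m, g)\<in>T. p0 * (\<Prod>j<K. real (g j) powr (-\<gamma>)))
      = real (Suc K) * p0 * (\<Sum>g\<in>G. \<Prod>j<K. real (g j) powr (-\<gamma>))"
    unfolding T_def sum.cartesian_product[symmetric] by (simp add: sum_distrib_left mult.assoc)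
  also have "(\<Sum>g\<in>G. \<Prod>j<K. real (g j) powr (-\<gamma>)) = (\<Prod>j<K. \<Sum>n=1..N. real n powr (-\<gamma>))"
    unfolding G_def by (rule prod_sum_PiE[symmetric]) auto
  finally show ?thesis
    using total by simp
qed

lemma summable_zeta_iff: "summable (\<lambda>n. 1 / real (Suc n) powr s) \<longleftrightarrow> 1 < s"
proof -
  have "summable (\<lambda>n. 1 / real (Suc n) powr s) \<longleftrightarrow> summable (\<lambda>n. real n powr (-s))"
    by (subst summable_Suc_iff[symmetric]) (simp add: powr_minus_divide del: of_nat_Suc)
  then show ?thesis
    by (simp add: summable_real_powr_iff)
qed

lemma zeta_real_ge_1:
  assumes "1 < s"
  shows "1 \<le> zeta_real s"
proof -
  have "summable (\<lambda>n. 1 / real (Suc n) powr s)"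
    using assms summable_zeta_iff by blast
  then have "(\<Sum>n<1. 1 / real (Suc n) powr s) \<le> zeta_real s"
    unfolding zeta_real_def by (rule sum_le_suminf) auto
  then show ?thesis
    by simp
qed

lemma zeta_real_bound_if_partial_sums_bounded:
  assumes "0 < K" "0 < c" and partial_bound: "\<And>N. c * (\<Sum>n=1..N. real n powr (-\<gamma>)) ^ K \<le> 1"
  shows "1 < \<gamma> \<and> c * zeta_real \<gamma> ^ K \<le> 1"
proof -
  define f where "f = (\<lambda>n. 1 / real (Suc n) powr \<gamma>)"
  have partial_sum_eq: "(\<Sum>n=1..N. real n powr (-\<gamma>)) = sum f {..<N}" for N
    using sum_bounds_lt_plus1[of "\<lambda>n. real n powr (-\<gamma>)" N]
    by (simp add: f_def powr_minus_divide del: of_nat_Suc)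
  have "sum f {..<N} \<le> 1 / c" for N
  proof (cases N)
    case 0
    then show ?thesis using \<open>0 < c\<close> by simp
  next
    case (Suc N')
    then have "f 0 \<le> sum f {..<N}"
      by (intro member_le_sum) (auto simp: f_def)
    then have "sum f {..<N} \<le> sum f {..<N} ^ K"
      using \<open>0 < K\<close> by (intro self_le_power) (auto simp: f_def)
    then have "c * sum f {..<N} \<le> 1"
      using partial_bound[of N] \<open>0 < c\<close> partial_sum_eq[of N]
      by (metis mult_left_mono less_imp_le order_trans)
    then show ?thesis
      using \<open>0 < c\<close> by (simp add: field_simps)
  qed
  then have "summable f"
    by (intro summableI_nonneg_bounded[of f]) (auto simp: f_def)
  then have "1 < \<gamma>"
    unfolding f_def summable_zeta_iff .
  have "(\<lambda>N. c * sum f {..<N} ^ K) \<longlonglongrightarrow> c * zeta_real \<gamma> ^ K"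
    unfolding zeta_real_def f_def[symmetric]
    by (intro tendsto_intros summable_LIMSEQ \<open>summable f\<close>)
  then have "c * zeta_real \<gamma> ^ K \<le> 1"
    by (rule LIMSEQ_le_const2) (use partial_bound partial_sum_eq in auto)
  with \<open>1 < \<gamma>\<close> show ?thesis ..
qed

theorem mainTheorem6:
  fixes M :: "'a measure" and P :: "'a \<Rightarrow> int set set"
    and k :: nat and \<gamma> p0 :: real
  assumes "prob_space M"
    and "\<And>\<omega>. \<omega> \<in> space M \<Longrightarrow> (\<forall>A\<in>P \<omega>. finite A) \<and> disjoint (P \<omega>)"
    and "\<And>S. finite S \<Longrightarrow> {\<omega> \<in> space M. S \<in> P \<omega>} \<in> sets M"
    and "k \<ge> 2"
    and "p0 > 0"
    and "\<And>i :: nat \<Rightarrow> int. (\<forall>j. Suc j < k \<longrightarrow> i j < i (Suc j)) \<Longrightarrow>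
           measure M {\<omega> \<in> space M. i ` {..<k} \<in> P \<omega>}
             \<ge> p0 * (\<Prod>j<k - 1. (real_of_int (i (Suc j) - i j)) powr (-\<gamma>))"
  shows "\<gamma> > 1 \<and> p0 \<le> 1 / (real k * zeta_real \<gamma> ^ (k - 1))"
proof -
  interpret prob_space M by fact
  obtain K where k: "k = Suc K" "0 < K"
    using \<open>k \<ge> 2\<close> by (cases k) auto
  have "real k * p0 * (\<Sum>n=1..N. real n powr (-\<gamma>)) ^ K \<le> 1" for N
    unfolding k(1)
  proof (rule partial_zeta_power_bound)
    show "\<And>\<omega>. \<omega> \<in> space M \<Longrightarrow> disjoint (P \<omega>)" "\<And>S. finite S \<Longrightarrow> {\<omega> \<in> space M. S \<in> P \<omega>} \<in> events"
      using assms(2,3) by auto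
    show "\<And>i. \<forall>j. Suc j < Suc K \<longrightarrow> i j < i (Suc j) \<Longrightarrow>
        p0 * (\<Prod>j<K. real_of_int (i (Suc j) - i j) powr - \<gamma>) \<le> prob {\<omega> \<in> space M. i ` {..<Suc K} \<in> P \<omega>}"
      using assms(6) unfolding k(1) by simp
  qed
  then have "1 < \<gamma>" and bound: "real k * p0 * zeta_real \<gamma> ^ K \<le> 1"
    using zeta_real_bound_if_partial_sums_bounded[of K "real k * p0" \<gamma>] k \<open>p0 > 0\<close> by auto
  moreover have "0 < real k * zeta_real \<gamma> ^ K"
    using zeta_real_ge_1[OF \<open>1 < \<gamma>\<close>] k by simp
  ultimately show ?thesis
    using k by (simp add: pos_le_divide_eq algebra_simps)
qed

end
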